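(* Let $p(n)$ be the number of partitions of $n$. For $k\ge1$ let $\mathcal{E}_k(x)=[q^x]\prod_{i=1}^{k}(1-q^i)^{-2}$ for integers $x\ge0$. Then for each $k$, $\mathcal{E}_k$ coincides for all integers $x\ge 0$ with a single quasi-polynomial in $x$ (whose constituent polynomial depends only on the residue class of $x$ modulo $L_k=\operatorname{lcm}(1,\dots,k)$), and for every integer $n\ge1$, $$p(n)=\sum_{k=1}^{\lfloor\sqrt n\rfloor}\mathcal{E}_k(n-k^2).$$
   Context: $[q^x]F(q)$ denotes the coefficient of $q^x$ in the power series $F(q)$. *)

theory Defs
  imports "HOL-Library.Multiset" "HOL-Computational_Algebra.Formal_Power_Series"
    "HOL-Computational_Algebra.Polynomial"
begin

definition partition_count :: "nat \<Rightarrow> nat" where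
  "partition_count n = card {M :: nat multiset. (\<forall>x\<in>#M. 0 < x) \<and> sum_mset M = n}"

definition E :: "nat \<Rightarrow> nat \<Rightarrow> rat" where
  "E k x = fps_nth (\<Prod>i\<in>{1..k}. inverse ((1 - fps_X ^ i) ^ 2)) x"

end

theory Submission
  imports Defs "HOL-Computational_Algebra.Polynomial_FPS"
begin

(* Quasi-polynomiality: with L = lcm(1, ..., k) every 1 - q^i (i <= k) divides 1 - q^L, so
   prod_{i<=k} (1 - q^i)^(-2) = R(q) / (1 - q^L)^(2k) with R a polynomial of degree < 2kL.
   The coefficient of q^m in (1 - q^L)^(-2k) is binom(m/L + 2k - 1, 2k - 1) if L divides m and 0
   otherwise. Hence the contribution of the monomial q^d of R to the coefficient of q^x is a
   fixed polynomial in x on the residue class of d modulo L; it even covers x < d, because then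
   (x - d)/L is a negative integer >= -(2k - 1), where that binomial polynomial vanishes.

   Partition formula: every partition of n >= 1 has a unique Durfee square, of some side k with
   k^2 <= n. Removing the square leaves a partition into at most k parts (the part to the right
   of the square) and a partition into parts <= k (the part below it). Both kinds are counted
   by prod_{i<=k} (1 - q^i)^(-1), so the partitions of n with Durfee square k are counted by
   the coefficient E_k(n - k^2) of its square. *)

unbundle fps_syntax

section \<open>Quasi-polynomiality of the coefficients\<close>

definition geometric_poly :: "nat \<Rightarrow> nat \<Rightarrow> 'a::comm_ring_1 poly" where
  "geometric_poly i n = (\<Sum>j<n. monom 1 (i * j))"

lemma fps_of_poly_geometric_poly:
  "fps_of_poly (geometric_poly i n :: 'a::comm_ring_1 poly) = (\<Sum>j<n. fps_X ^ (i * j))"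
  by (simp add: geometric_poly_def fps_of_poly_sum fps_of_poly_monom')

lemma one_minus_fps_X_power_times_geometric_poly:
  "(1 - fps_X ^ i) * fps_of_poly (geometric_poly i n :: 'a::comm_ring_1 poly) = 1 - fps_X ^ (i * n)"
proof (induction n)
  case (Suc n)
  have "(1 - fps_X ^ i) * fps_of_poly (geometric_poly i (Suc n) :: 'a poly)
      = 1 - fps_X ^ (i * n) + (1 - fps_X ^ i) * fps_X ^ (i * n)"
    using Suc by (simp add: fps_of_poly_geometric_poly distrib_left)
  also have "\<dots> = 1 - fps_X ^ (i * Suc n)"
    by (simp add: algebra_simps power_add)
  finally show ?case .
qed (simp add: geometric_poly_def)

lemma degree_geometric_poly: "degree (geometric_poly i n) \<le> i * (n - 1)"
  unfolding geometric_poly_def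
proof (rule degree_sum_le)
  show "degree (monom 1 (i * j)) \<le> i * (n - 1)" if "j \<in> {..<n}" for j
    using that by (intro order.trans[OF degree_monom_le] mult_left_mono) auto
qed simp

lemma prod_inverse_one_minus_fps_X_power:
  fixes I :: "nat set" and L m :: nat
  assumes "finite I" "L > 0" "\<forall>i\<in>I. i dvd L"
  shows "(\<Prod>i\<in>I. inverse ((1 - fps_X ^ i :: 'a::field fps) ^ m)) =
           fps_of_poly (\<Prod>i\<in>I. geometric_poly i (L div i) ^ m) *
           inverse ((1 - fps_X ^ L) ^ (m * card I))"
proof -
  let ?g = "\<lambda>i. fps_of_poly (geometric_poly i (L div i) :: 'a poly)"
  let ?A = "1 - fps_X ^ L :: 'a fps"
  have factor: "inverse ((1 - fps_X ^ i) ^ m) = ?g i ^ m * inverse (?A ^ m)" if "i \<in> I" for i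
  proof (rule fps_inverse_unique)
    have "(1 - fps_X ^ i) * ?g i = ?A"
      using assms(3) that by (simp add: one_minus_fps_X_power_times_geometric_poly)
    then have "(1 - fps_X ^ i) ^ m * (?g i ^ m * inverse (?A ^ m)) = ?A ^ m * inverse (?A ^ m)"
      by (simp only: mult.assoc[symmetric] power_mult_distrib[symmetric])
    also have "\<dots> = 1"
      using assms(2) by (intro inverse_mult_eq_1') simp
    finally show "(1 - fps_X ^ i) ^ m * (?g i ^ m * inverse (?A ^ m)) = 1" .
  qed
  have "(\<Prod>i\<in>I. inverse ((1 - fps_X ^ i) ^ m)) = (\<Prod>i\<in>I. ?g i ^ m * inverse (?A ^ m))"
    by (rule prod.cong[OF refl factor])
  also have "\<dots> = (\<Prod>i\<in>I. ?g i ^ m) * inverse (?A ^ m) ^ card I"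
    by (simp only: prod.distrib prod_constant)
  finally show ?thesis
    by (simp only: fps_of_poly_prod fps_of_poly_power fps_inverse_power power_mult)
qed

lemma degree_prod_geometric_poly:
  fixes I :: "nat set" and L m :: nat
  assumes "finite I" "\<forall>i\<in>I. i dvd L"
  shows "degree (\<Prod>i\<in>I. geometric_poly i (L div i) ^ m :: 'a::idom poly) \<le> m * card I * (L - 1)"
proof -
  have "degree (geometric_poly i (L div i) ^ m :: 'a poly) \<le> m * (L - 1)" if "i \<in> I" for i
  proof -
    have "i * (L div i - 1) \<le> L - 1"
      using assms(2) that by (cases "i = 0") (auto simp: right_diff_distrib')
    then have "degree (geometric_poly i (L div i) :: 'a poly) \<le> L - 1"
      by (rule order.trans[OF degree_geometric_poly])
    then have "degree (geometric_poly i (L div i) :: 'a poly) * m \<le> m * (L - 1)"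
      by (subst mult.commute, rule mult_left_mono) simp
    then show ?thesis
      using degree_power_le[of "geometric_poly i (L div i) :: 'a poly" m] by linarith
  qed
  then have "(\<Sum>i\<in>I. degree (geometric_poly i (L div i) ^ m :: 'a poly)) \<le>
      (\<Sum>i\<in>I. m * (L - 1))"
    by (rule sum_mono)
  then show ?thesis
    using degree_prod_sum_le[OF assms(1), of "\<lambda>i. geometric_poly i (L div i) ^ m :: 'a poly"]
    by (simp add: o_def ac_simps)
qed

lemma nth_inverse_one_minus_fps_X_power_power:
  fixes L :: nat
  assumes "L > 0"
  shows "inverse ((1 - fps_X ^ L :: 'a::field fps) ^ Suc r) $ n =
           (if L dvd n then of_nat (n div L + r choose r) else 0)"
proof (induction r arbitrary: n)
  case 0
  have "inverse (1 - fps_X ^ L :: 'a fps) = Abs_fps (\<lambda>n. if L dvd n then 1 else 0)"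
  proof (rule fps_inverse_unique, rule fps_ext)
    fix n
    show "((1 - fps_X ^ L) * Abs_fps (\<lambda>n. if L dvd n then 1 else 0 :: 'a)) $ n = (1 :: 'a fps) $ n"
      using assms by (auto simp: algebra_simps fps_X_power_mult_nth not_less
          dest: dvd_imp_le dvd_diffD)
  qed
  then show ?case by simp
next
  case (Suc r)
  let ?G = "inverse ((1 - fps_X ^ L :: 'a fps) ^ Suc (Suc r))"
  have unit: "(1 - fps_X ^ L :: 'a fps) * inverse (1 - fps_X ^ L) = 1"
    using assms by (intro inverse_mult_eq_1') simp
  have "(1 - fps_X ^ L) * ?G = inverse ((1 - fps_X ^ L :: 'a fps) ^ Suc r)"
    by (simp only: power_Suc[of _ "Suc r"] fps_inverse_mult mult.assoc[symmetric] unit mult_1_left)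
  then have rec: "?G = inverse ((1 - fps_X ^ L) ^ Suc r) + fps_X ^ L * ?G"
    by (simp add: algebra_simps)
  show ?case
  proof (induction n rule: less_induct)
    case (less n)
    have "?G $ n = inverse ((1 - fps_X ^ L) ^ Suc r) $ n + (if n < L then 0 else ?G $ (n - L))"
      by (subst rec) (simp add: fps_X_power_mult_nth)
    also have "\<dots> = (if L dvd n then of_nat (n div L + Suc r choose Suc r) else 0)"
    proof (cases "n < L")
      case False
      then have "L dvd n - L \<longleftrightarrow> L dvd n" "n div L = Suc ((n - L) div L)"
        using assms dvd_diffD[of L n L] dvd_diff_nat[of L n L] le_div_geq[of L n] by auto
      moreover have "?G $ (n - L) =
          (if L dvd n - L then of_nat ((n - L) div L + Suc r choose Suc r) else 0)"
        using less[of "n - L"] False assms by simp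
      ultimately show ?thesis using False Suc.IH[of n] by (simp del: power_Suc)
    qed (use assms Suc.IH[of n] in \<open>auto simp del: power_Suc dest: dvd_imp_le\<close>)
    finally show ?case .
  qed
qed

definition binomial_poly :: "nat \<Rightarrow> 'a::field_char_0 poly" where
  "binomial_poly r = smult (inverse (fact r)) (\<Prod>j<r. [:of_nat j + 1, 1:])"

lemma poly_binomial_poly: "poly (binomial_poly r) y = (y + of_nat r) gchoose r"
  by (simp add: binomial_poly_def gbinomial_pochhammer' pochhammer_prod poly_prod
      atLeast0LessThan field_simps)

lemma binomial_poly_residue_class:
  fixes L d x :: nat
  assumes "L > 0" "d < Suc r * L"
  shows "(if d \<le> x \<and> L dvd x - d then of_nat ((x - d) div L + r choose r) else 0) =
         (if d mod L = x mod L
          then poly (binomial_poly r) ((of_nat x - of_nat d) / of_nat L) else (0 :: 'a::field_char_0))"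
proof (cases "d mod L = x mod L")
  case same_class: True
  show ?thesis
  proof (cases "d \<le> x")
    case True
    have "L dvd x - d"
      using same_class mod_eq_dvd_iff_nat[OF True, of L] by simp
    then obtain y where "x - d = L * y" ..
    then have "(of_nat x - of_nat d) / of_nat L = (of_nat y :: 'a)"
      using True assms(1) by (simp add: of_nat_diff[symmetric] field_simps)
    then show ?thesis
      using \<open>x - d = L * y\<close> True same_class assms(1)
      by (simp add: poly_binomial_poly binomial_gbinomial)
  next
    case False
    have "L dvd d - x"
      using False same_class mod_eq_dvd_iff_nat[of x d L] by simp
    then obtain t where t: "d - x = L * t" ..
    have "0 < L * t" "L * t < L * Suc r"
      using t False assms(2) mult.commute[of L "Suc r"] by linarith+
    then have "1 \<le> t" "t \<le> r"
      by (simp add: Suc_le_eq, simp only: mult_less_cancel1 less_Suc_eq_le)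
    have "d = x + L * t"
      using t False by simp
    then have "(of_nat x - of_nat d) / of_nat L + of_nat r = (of_nat (r - t) :: 'a)"
      using \<open>t \<le> r\<close> assms(1) by (simp add: of_nat_diff)
    moreover have "(of_nat (r - t) gchoose r :: 'a) = 0"
      using \<open>1 \<le> t\<close> \<open>t \<le> r\<close> by (simp del: of_nat_diff flip: binomial_gbinomial)
    ultimately show ?thesis
      using False by (simp add: poly_binomial_poly)
  qed
next
  case False
  then have "\<not> (d \<le> x \<and> L dvd x - d)"
    using mod_eq_dvd_iff_nat[of d x L] by auto
  then show ?thesis using False by simp
qed

lemma quasi_polynomial_nth_rational_fps:
  fixes R :: "'a::field_char_0 poly" and L r :: nat
  assumes "L > 0" "degree R < Suc r * L"
  shows "\<exists>P. \<forall>x. (fps_of_poly R * inverse ((1 - fps_X ^ L) ^ Suc r)) $ x =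
                  poly (P (x mod L)) (of_nat x)"
proof -
  let ?N = "Suc r * L"
  define Q :: "nat \<Rightarrow> 'a poly"
    where "Q d = binomial_poly r \<circ>\<^sub>p [:- of_nat d / of_nat L, 1 / of_nat L:]" for d
  define P where "P c = (\<Sum>d<?N. if d mod L = c then smult (coeff R d) (Q d) else 0)" for c
  have "(fps_of_poly R * inverse ((1 - fps_X ^ L) ^ Suc r)) $ x = poly (P (x mod L)) (of_nat x)" for x
  proof -
    define T where "T d = (if d mod L = x mod L then coeff R d * poly (Q d) (of_nat x) else 0)" for d
    have term_eq: "coeff R d *
        (if d \<le> x \<and> L dvd x - d then of_nat ((x - d) div L + r choose r) else 0) = T d" for d
    proof (cases "d < ?N")
      case True
      have "poly (Q d) (of_nat x) = poly (binomial_poly r) ((of_nat x - of_nat d) / of_nat L)"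
        by (simp add: Q_def poly_pcompose diff_divide_distrib)
      then show ?thesis
        using binomial_poly_residue_class[OF assms(1) True, of x, where ?'a = 'a]
        by (simp add: T_def)
    next
      case False
      then have "coeff R d = 0"
        using assms(2) by (intro coeff_eq_0) simp
      then show ?thesis by (simp add: T_def)
    qed
    have "(fps_of_poly R * inverse ((1 - fps_X ^ L) ^ Suc r)) $ x = (\<Sum>d=0..x. T d)"
      by (simp add: fps_mult_nth nth_inverse_one_minus_fps_X_power_power[OF assms(1)]
          del: power_Suc flip: term_eq)
    also have "\<dots> = (\<Sum>d<?N. T d)"
    proof (rule sum.same_carrierI[of "{..x + ?N}"])
      show "T d = 0" if "d \<in> {..x + ?N} - {0..x}" for d
        using that term_eq[of d] by simp
      show "T d = 0" if "d \<in> {..x + ?N} - {..<?N}" for d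
        using that term_eq[of d] assms(2) by (simp add: coeff_eq_0)
    qed auto
    also have "\<dots> = poly (P (x mod L)) (of_nat x)"
      unfolding P_def T_def poly_sum by (intro sum.cong) auto
    finally show ?thesis .
  qed
  then show ?thesis by blast
qed

theorem E_quasi_polynomial:
  assumes "k \<ge> 1"
  shows "\<exists>P :: nat \<Rightarrow> rat poly. \<forall>x. E k x = poly (P (x mod Lcm {1..k})) (of_nat x)"
proof -
  define L where "L = Lcm {1..k}"
  define R :: "rat poly" where "R = (\<Prod>i\<in>{1..k}. geometric_poly i (L div i) ^ 2)"
  have "L \<noteq> 0"
    unfolding L_def by (subst Lcm_0_iff) auto
  then have "L > 0" by simp
  have dvd_L: "\<forall>i\<in>{1..k}. i dvd L"
    by (simp add: L_def)
  have "2 * k = Suc (2 * k - 1)"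
    using assms by simp
  then have "(\<Prod>i\<in>{1..k}. inverse ((1 - fps_X ^ i :: rat fps) ^ 2)) =
      fps_of_poly R * inverse ((1 - fps_X ^ L) ^ Suc (2 * k - 1))"
    using prod_inverse_one_minus_fps_X_power[OF finite_atLeastAtMost \<open>L > 0\<close> dvd_L, of 2]
    by (simp add: R_def)
  then have E_eq: "E k x = (fps_of_poly R * inverse ((1 - fps_X ^ L) ^ Suc (2 * k - 1))) $ x" for x
    unfolding E_def by (rule arg_cong)
  have "degree R \<le> 2 * k * (L - 1)"
    using degree_prod_geometric_poly[OF finite_atLeastAtMost dvd_L, of 2] by (simp add: R_def)
  also have "\<dots> < Suc (2 * k - 1) * L"
    using assms \<open>L > 0\<close> by (simp add: diff_mult_distrib2)
  finally obtain P where "\<forall>x. E k x = poly (P (x mod L)) (of_nat x)"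
    using quasi_polynomial_nth_rational_fps[OF \<open>L > 0\<close>] E_eq by metis
  then show ?thesis
    unfolding L_def by blast
qed

section \<open>Partitions with bounded parts\<close>

lemma card_filter_add_card_filter_not:
  assumes "finite A"
  shows "card A = card {x \<in> A. P x} + card {x \<in> A. \<not> P x}"
proof -
  have "A = {x \<in> A. P x} \<union> {x \<in> A. \<not> P x}" by blast
  then show ?thesis
    using assms by (metis (no_types, lifting) card_Un_disjoint disjoint_iff finite_Un mem_Collect_eq)
qed

lemma mult_size_le_sum_mset:
  fixes M :: "nat multiset"
  assumes "\<forall>x\<in>#M. c \<le> x"
  shows "c * size M \<le> sum_mset M"
  using assms by (induction M) auto

lemma member_le_sum_mset: "x \<in># M \<Longrightarrow> x \<le> sum_mset (M :: nat multiset)"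
  by (induction M) auto

lemma sum_mset_image_mset_plus:
  "sum_mset (image_mset (\<lambda>x. x + c) M) = sum_mset M + c * size (M :: nat multiset)"
  by (induction M) auto

lemma image_mset_minus_plus: "image_mset (\<lambda>x. x - c) (image_mset (\<lambda>x. x + c) M) = (M :: nat multiset)"
  by (simp add: multiset.map_comp o_def)

lemma image_mset_plus_minus:
  "\<forall>x\<in>#M. c \<le> x \<Longrightarrow> image_mset (\<lambda>x. x + c) (image_mset (\<lambda>x. x - c) M) = (M :: nat multiset)"
  by (simp add: multiset.map_comp o_def multiset.map_ident_strong)

lemma finite_msets_size_le:
  assumes "finite A"
  shows "finite {M. set_mset M \<subseteq> A \<and> size M \<le> n}"
proof -
  have "{M. set_mset M \<subseteq> A \<and> size M \<le> n} = (\<Union>s\<le>n. multisets_of_size A s)"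
    by (auto simp: multisets_of_size_def)
  then show ?thesis
    using assms by auto
qed

definition partitions :: "nat \<Rightarrow> nat multiset set" where
  "partitions n = {M. (\<forall>x\<in>#M. 0 < x) \<and> sum_mset M = n}"

definition partitions_parts_le :: "nat \<Rightarrow> nat \<Rightarrow> nat multiset set" where
  "partitions_parts_le k n = {B. set_mset B \<subseteq> {1..k} \<and> sum_mset B = n}"

text \<open>Partitions of \<open>n\<close> into at most \<open>k\<close> parts, padded with zero parts to exactly \<open>k\<close> parts.\<close>
definition padded_partitions :: "nat \<Rightarrow> nat \<Rightarrow> nat multiset set" where
  "padded_partitions k n = {U. size U = k \<and> sum_mset U = n}"

lemma finite_partitions: "finite (partitions n)"
proof (rule finite_subset[OF _ finite_msets_size_le[of "{1..n}" n]])
  show "partitions n \<subseteq> {M. set_mset M \<subseteq> {1..n} \<and> size M \<le> n}"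
  proof
    fix M assume "M \<in> partitions n"
    then have pos: "\<forall>x\<in>#M. 1 \<le> x" and "sum_mset M = n"
      by (auto simp: partitions_def Suc_le_eq)
    then show "M \<in> {M. set_mset M \<subseteq> {1..n} \<and> size M \<le> n}"
      using mult_size_le_sum_mset[OF pos] member_le_sum_mset by fastforce
  qed
qed simp

lemma finite_partitions_parts_le: "finite (partitions_parts_le k n)"
proof (rule finite_subset[OF _ finite_msets_size_le[of "{1..k}" n]])
  show "partitions_parts_le k n \<subseteq> {M. set_mset M \<subseteq> {1..k} \<and> size M \<le> n}"
  proof
    fix B assume "B \<in> partitions_parts_le k n"
    then have "set_mset B \<subseteq> {1..k}" "sum_mset B = n"
      by (auto simp: partitions_parts_le_def)
    moreover have "\<forall>x\<in>#B. 1 \<le> x"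
      using \<open>set_mset B \<subseteq> {1..k}\<close> by auto
    ultimately show "B \<in> {M. set_mset M \<subseteq> {1..k} \<and> size M \<le> n}"
      using mult_size_le_sum_mset[of B 1] by simp
  qed
qed simp

lemma finite_padded_partitions: "finite (padded_partitions k n)"
  by (rule finite_subset[OF _ finite_msets_size_le[of "{0..n}" k]])
    (auto simp: padded_partitions_def member_le_sum_mset)

fun bounded_partition_count :: "nat \<Rightarrow> nat \<Rightarrow> nat" where
  "bounded_partition_count 0 n = (if n = 0 then 1 else 0)"
| "bounded_partition_count (Suc k) n = bounded_partition_count k n +
     (if n < Suc k then 0 else bounded_partition_count (Suc k) (n - Suc k))"

lemma card_partitions_parts_le: "card (partitions_parts_le k n) = bounded_partition_count k n"
proof (induction k n rule: bounded_partition_count.induct)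
  case (1 n)
  have "partitions_parts_le 0 n = (if n = 0 then {{#}} else {})"
    by (auto simp: partitions_parts_le_def)
  then show ?case by simp
next
  case (2 k n)
  have without_k: "{B \<in> partitions_parts_le (Suc k) n. Suc k \<notin># B} = partitions_parts_le k n"
    by (auto simp: partitions_parts_le_def le_Suc_eq)
  have with_k: "{B \<in> partitions_parts_le (Suc k) n. Suc k \<in># B} =
      add_mset (Suc k) ` {B \<in> partitions_parts_le (Suc k) (n - Suc k). Suc k \<le> n}"
  proof (intro equalityI subsetI)
    fix B assume "B \<in> {B \<in> partitions_parts_le (Suc k) n. Suc k \<in># B}"
    then have B: "set_mset B \<subseteq> {1..Suc k}" "sum_mset B = n" "Suc k \<in># B"
      by (auto simp: partitions_parts_le_def)
    have "B - {#Suc k#} \<in> {B \<in> partitions_parts_le (Suc k) (n - Suc k). Suc k \<le> n}"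
      using B member_le_sum_mset[OF B(3)] sum_mset.remove[OF B(3)]
      by (auto simp: partitions_parts_le_def dest: in_diffD)
    then show "B \<in> add_mset (Suc k) ` {B \<in> partitions_parts_le (Suc k) (n - Suc k). Suc k \<le> n}"
      using B(3) by (auto intro: rev_image_eqI)
  qed (auto simp: partitions_parts_le_def)
  have "card (add_mset (Suc k) ` {B \<in> partitions_parts_le (Suc k) (n - Suc k). Suc k \<le> n})
      = (if n < Suc k then 0 else bounded_partition_count (Suc k) (n - Suc k))"
    using "2.IH"(2) by (simp add: card_image inj_on_def del: bounded_partition_count.simps)
  then show ?case
    using card_filter_add_card_filter_not[OF finite_partitions_parts_le,
        of "Suc k" n "\<lambda>B. Suc k \<notin># B"]
    by (simp add: without_k with_k "2.IH"(1) del: bounded_partition_count.simps(1))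
qed

lemma card_padded_partitions: "card (padded_partitions k n) = bounded_partition_count k n"
proof (induction k n rule: bounded_partition_count.induct)
  case (1 n)
  have "padded_partitions 0 n = (if n = 0 then {{#}} else {})"
    by (auto simp: padded_partitions_def)
  then show ?case by simp
next
  case (2 k n)
  let ?shift = "image_mset Suc"
  have with_zero: "{U \<in> padded_partitions (Suc k) n. 0 \<in># U} = add_mset 0 ` padded_partitions k n"
  proof (intro equalityI subsetI)
    fix U assume "U \<in> {U \<in> padded_partitions (Suc k) n. 0 \<in># U}"
    then have "U - {#0#} \<in> padded_partitions k n" "0 \<in># U"
      by (auto simp: padded_partitions_def size_Diff_singleton sum_mset.remove)
    then show "U \<in> add_mset 0 ` padded_partitions k n"
      by (auto intro: rev_image_eqI)
  qed (auto simp: padded_partitions_def)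
  have without_zero: "{U \<in> padded_partitions (Suc k) n. 0 \<notin># U} =
      ?shift ` {V \<in> padded_partitions (Suc k) (n - Suc k). Suc k \<le> n}"
  proof (intro equalityI subsetI)
    fix U assume "U \<in> {U \<in> padded_partitions (Suc k) n. 0 \<notin># U}"
    then have U: "size U = Suc k" "sum_mset U = n" "\<forall>x\<in>#U. 1 \<le> x"
      by (auto simp: padded_partitions_def Suc_le_eq intro: gr0I)
    define V where "V = image_mset (\<lambda>x. x - 1) U"
    have "U = ?shift V"
      using image_mset_plus_minus[OF U(3)] by (simp add: V_def)
    moreover have "size V = Suc k"
      using U(1) by (simp add: V_def)
    moreover have "sum_mset V + Suc k = n"
      using U(2) \<open>size V = Suc k\<close> \<open>U = ?shift V\<close> sum_mset_image_mset_plus[of 1 V] by simp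
    ultimately show "U \<in> ?shift ` {V \<in> padded_partitions (Suc k) (n - Suc k). Suc k \<le> n}"
      by (auto simp: padded_partitions_def)
  qed (auto simp: padded_partitions_def sum_mset_image_mset_plus[of 1, simplified])
  have "inj_on ?shift A" for A
    by (rule inj_on_inverseI[of _ "image_mset (\<lambda>x. x - 1)"]) (simp add: multiset.map_comp o_def)
  then have "card (?shift ` {V \<in> padded_partitions (Suc k) (n - Suc k). Suc k \<le> n})
      = (if n < Suc k then 0 else bounded_partition_count (Suc k) (n - Suc k))"
    using "2.IH"(2) by (simp add: card_image del: bounded_partition_count.simps)
  moreover have "card (add_mset 0 ` padded_partitions k n) = bounded_partition_count k n"
    using "2.IH"(1) by (simp add: card_image inj_on_def del: bounded_partition_count.simps)
  ultimately show ?case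
    using card_filter_add_card_filter_not[OF finite_padded_partitions,
        of "Suc k" n "\<lambda>U. 0 \<in># U"]
    by (simp add: with_zero without_zero del: bounded_partition_count.simps(1))
qed

lemma nth_prod_inverse_one_minus_fps_X_power:
  "(\<Prod>i\<in>{1..k}. inverse (1 - fps_X ^ i :: 'a::field fps)) $ n = of_nat (bounded_partition_count k n)"
proof (induction k n rule: bounded_partition_count.induct)
  case (2 k n)
  define F where "F k = (\<Prod>i\<in>{1..k}. inverse (1 - fps_X ^ i :: 'a fps))" for k
  have "F (Suc k) * (1 - fps_X ^ Suc k) = F k"
    by (simp add: F_def atLeastAtMostSuc_conv mult.assoc inverse_mult_eq_1)
  then have "F (Suc k) = F k + fps_X ^ Suc k * F (Suc k)"
    by (simp add: algebra_simps)
  then have "F (Suc k) $ n = (F k + fps_X ^ Suc k * F (Suc k)) $ n"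
    by (rule arg_cong)
  also have "\<dots> = F k $ n + (if n < Suc k then 0 else F (Suc k) $ (n - Suc k))"
    by (simp only: fps_X_power_mult_nth fps_add_nth)
  finally show ?case
    using 2 by (simp add: F_def)
qed simp

lemma E_eq_convolution:
  "E k x = (\<Sum>j\<le>x. of_nat (bounded_partition_count k j * bounded_partition_count k (x - j)))"
proof -
  have square: "(\<Prod>i\<in>{1..k}. inverse ((1 - fps_X ^ i :: rat fps) ^ 2)) =
      (\<Prod>i\<in>{1..k}. inverse (1 - fps_X ^ i)) * (\<Prod>i\<in>{1..k}. inverse (1 - fps_X ^ i))"
    by (simp add: fps_inverse_mult prod.distrib power2_eq_square)
  show ?thesis
    unfolding E_def square fps_mult_nth nth_prod_inverse_one_minus_fps_X_power
    by (simp add: atLeast0AtMost)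
qed

section \<open>Durfee square decomposition of partitions\<close>

text \<open>The second condition says that fewer than \<open>k + 1\<close> parts are \<open>\<ge> k + 1\<close>, so \<open>k\<close> is the
  side of the Durfee square of \<open>M\<close>.\<close>
definition durfee_partitions :: "nat \<Rightarrow> nat \<Rightarrow> nat multiset set" where
  "durfee_partitions n k =
     {M \<in> partitions n. k \<le> size {#x \<in># M. k \<le> x#} \<and> size {#x \<in># M. k < x#} \<le> k}"

lemma durfee_partitions_subset: "durfee_partitions n k \<subseteq> partitions n"
  by (auto simp: durfee_partitions_def)

lemma partition_has_durfee_square:
  assumes "M \<in> partitions n" "n \<ge> 1"
  shows "\<exists>k\<ge>1. M \<in> durfee_partitions n k"
proof -
  define K where "K = {j. 1 \<le> j \<and> j \<le> size {#x \<in># M. j \<le> x#}}"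
  have "\<forall>x\<in>#M. 1 \<le> x" and "M \<noteq> {#}"
    using assms by (auto simp: partitions_def Suc_le_eq)
  then have all_parts: "{#x \<in># M. 1 \<le> x#} = M"
    by (simp add: filter_mset_eq_conv)
  have "1 \<le> size M"
    using \<open>M \<noteq> {#}\<close> by (simp add: Suc_le_eq nonempty_has_size)
  then have "1 \<in> K"
    unfolding K_def mem_Collect_eq all_parts by simp
  have "K \<subseteq> {..size M}"
    unfolding K_def using size_filter_mset_lesseq order_trans by fastforce
  then have "finite K"
    by (rule finite_subset) simp
  define k where "k = Max K"
  have "k \<in> K"
    unfolding k_def using \<open>finite K\<close> \<open>1 \<in> K\<close> by (intro Max_in) auto
  moreover have "Suc k \<notin> K"
    using Max_ge[OF \<open>finite K\<close>, of "Suc k"] by (auto simp: k_def)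
  moreover have "{#x \<in># M. Suc k \<le> x#} = {#x \<in># M. k < x#}"
    by (simp add: Suc_le_eq)
  ultimately have "M \<in> durfee_partitions n k"
    using assms(1) by (simp add: durfee_partitions_def K_def)
  then show ?thesis
    using \<open>k \<in> K\<close> by (auto simp: K_def)
qed

lemma durfee_square_unique:
  assumes "M \<in> durfee_partitions n k" "M \<in> durfee_partitions n k'"
  shows "k = k'"
proof -
  have "\<not> k < k'" if "M \<in> durfee_partitions n k" "M \<in> durfee_partitions n k'" for k k'
  proof
    assume "k < k'"
    then have "size {#x \<in># M. k' \<le> x#} \<le> size {#x \<in># M. k < x#}"
      by (intro size_mset_mono filter_mset_mono_strong) auto
    then show False
      using that \<open>k < k'\<close> by (auto simp: durfee_partitions_def)
  qed
  then show ?thesis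
    using assms by (meson linorder_neqE_nat)
qed

lemma durfee_square_le:
  assumes "M \<in> durfee_partitions n k"
  shows "k\<^sup>2 \<le> n"
proof -
  let ?F = "{#x \<in># M. k \<le> x#}"
  have "k * k \<le> k * size ?F"
    using assms by (simp add: durfee_partitions_def)
  also have "\<dots> \<le> sum_mset ?F"
    by (rule mult_size_le_sum_mset) simp
  also have "\<dots> \<le> sum_mset M"
    by (metis le_add1 multiset_partition sum_mset.union)
  finally show ?thesis
    using assms by (simp add: durfee_partitions_def partitions_def power2_eq_square)
qed

text \<open>For \<open>M \<in> durfee_partitions n k\<close> these are the \<open>k\<close> largest parts of \<open>M\<close>.\<close>
definition durfee_top :: "nat \<Rightarrow> nat multiset \<Rightarrow> nat multiset" where
  "durfee_top k M = {#x \<in># M. k < x#} + replicate_mset (k - size {#x \<in># M. k < x#}) k"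

lemma durfee_top_shift_add:
  assumes "size U = k" "set_mset B \<subseteq> {1..k}"
  shows "durfee_top k (image_mset (\<lambda>x. x + k) U + B) = image_mset (\<lambda>x. x + k) U"
proof -
  define V where "V = image_mset (\<lambda>x. x + k) U"
  have B_small: "{#x \<in># B. k < x#} = {#}"
    using assms(2) by (auto simp: filter_mset_eq_conv)
  have "{#x \<in># V. \<not> k < x#} = {#x \<in># V. x = k#}"
    by (rule filter_mset_cong0) (auto simp: V_def)
  then have parts_k: "{#x \<in># V. \<not> k < x#} = replicate_mset (count V k) k"
    by (simp add: filter_eq_replicate_mset)
  have split: "V = {#x \<in># V. k < x#} + {#x \<in># V. \<not> k < x#}"
    by (rule multiset_partition)
  then have "count V k = k - size {#x \<in># V. k < x#}"
    using assms(1) parts_k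
    by (metis V_def add_diff_cancel_left' size_image_mset size_replicate_mset size_union)
  then have "durfee_top k (V + B) = {#x \<in># V. k < x#} + {#x \<in># V. \<not> k < x#}"
    by (simp add: durfee_top_def B_small parts_k)
  then show ?thesis
    using split by (simp add: V_def)
qed

lemma durfee_top_props:
  assumes "M \<in> durfee_partitions n k"
  shows "durfee_top k M \<subseteq># M" "\<forall>x\<in>#durfee_top k M. k \<le> x" "size (durfee_top k M) = k"
    "set_mset (M - durfee_top k M) \<subseteq> {1..k}"
proof -
  define W where "W = {#x \<in># M. k < x#}"
  have "size W \<le> k"
    using assms by (simp add: durfee_partitions_def W_def)
  have "{#x \<in># M. k \<le> x#} = W + {#x \<in># M. x = k#}"
    by (rule multiset_eqI) (auto simp: W_def)
  then have "k \<le> size W + count M k"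
    using assms by (simp add: durfee_partitions_def filter_eq_replicate_mset)
  then have "k - size W \<le> count M k"
    by linarith
  have count_top: "count (durfee_top k M) x =
      (if k < x then count M x else 0) + (if x = k then k - size W else 0)" for x
    by (simp add: durfee_top_def W_def)
  show "durfee_top k M \<subseteq># M"
    using \<open>k - size W \<le> count M k\<close> by (intro mset_subset_eqI) (simp add: count_top)
  show "\<forall>x\<in>#durfee_top k M. k \<le> x"
    by (auto simp: durfee_top_def)
  show "size (durfee_top k M) = k"
    using \<open>size W \<le> k\<close> by (simp add: durfee_top_def W_def)
  show "set_mset (M - durfee_top k M) \<subseteq> {1..k}"
  proof
    fix x assume x: "x \<in># M - durfee_top k M"
    then have "1 \<le> x"
      using assms in_diffD by (fastforce simp: durfee_partitions_def partitions_def Suc_le_eq)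
    moreover have "x \<le> k"
      using x by (cases "k < x") (auto simp: in_diff_count count_top)
    ultimately show "x \<in> {1..k}" by simp
  qed
qed

definition durfee_decompositions :: "nat \<Rightarrow> nat \<Rightarrow> (nat multiset \<times> nat multiset) set" where
  "durfee_decompositions n k =
     (\<Union>j\<le>n - k\<^sup>2. padded_partitions k j \<times> partitions_parts_le k (n - k\<^sup>2 - j))"

definition durfee_assemble :: "nat \<Rightarrow> nat multiset \<times> nat multiset \<Rightarrow> nat multiset" where
  "durfee_assemble k = (\<lambda>(U, B). image_mset (\<lambda>x. x + k) U + B)"

definition durfee_split :: "nat \<Rightarrow> nat multiset \<Rightarrow> nat multiset \<times> nat multiset" where
  "durfee_split k M = (image_mset (\<lambda>x. x - k) (durfee_top k M), M - durfee_top k M)"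

lemma mem_durfee_decompositions:
  assumes "k\<^sup>2 \<le> n"
  shows "(U, B) \<in> durfee_decompositions n k \<longleftrightarrow>
           size U = k \<and> set_mset B \<subseteq> {1..k} \<and> sum_mset U + k\<^sup>2 + sum_mset B = n"
  using assms
  by (auto simp: durfee_decompositions_def padded_partitions_def partitions_parts_le_def)

lemma durfee_assemble_mem_durfee_partitions:
  assumes "1 \<le> k" "k\<^sup>2 \<le> n" "p \<in> durfee_decompositions n k"
  shows "durfee_assemble k p \<in> durfee_partitions n k"
proof -
  obtain U B where p: "p = (U, B)" and U: "size U = k"
    and B: "set_mset B \<subseteq> {1..k}" and sum: "sum_mset U + k\<^sup>2 + sum_mset B = n"
    using assms(2,3) by (cases p) (auto simp: mem_durfee_decompositions)
  define V where "V = image_mset (\<lambda>x. x + k) U"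
  have B_small: "{#x \<in># B. k < x#} = {#}"
    using B by (auto simp: filter_mset_eq_conv)
  have "size {#x \<in># V + B. k < x#} \<le> k"
    using U size_filter_mset_lesseq[of _ V] by (simp add: V_def B_small)
  moreover have "{#x \<in># V. k \<le> x#} = V"
    by (simp add: V_def filter_mset_eq_conv)
  then have "k \<le> size {#x \<in># V + B. k \<le> x#}"
    using U by (simp add: V_def)
  moreover have "V + B \<in> partitions n"
    using assms(1) U B sum by (auto simp: partitions_def V_def sum_mset_image_mset_plus power2_eq_square)
  ultimately show ?thesis
    by (simp add: durfee_partitions_def durfee_assemble_def p V_def)
qed

lemma durfee_split_mem_durfee_decompositions:
  assumes "M \<in> durfee_partitions n k"
  shows "durfee_split k M \<in> durfee_decompositions n k"
proof -
  define U where "U = image_mset (\<lambda>x. x - k) (durfee_top k M)"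
  have "durfee_top k M = image_mset (\<lambda>x. x + k) U"
    using image_mset_plus_minus durfee_top_props(2)[OF assms] by (simp add: U_def)
  then have "sum_mset (durfee_top k M) = sum_mset U + k\<^sup>2"
    using durfee_top_props(3)[OF assms] by (simp add: sum_mset_image_mset_plus power2_eq_square)
  moreover have "sum_mset M = sum_mset (durfee_top k M) + sum_mset (M - durfee_top k M)"
    using durfee_top_props(1)[OF assms] by (metis subset_mset.add_diff_inverse sum_mset.union)
  moreover have "sum_mset M = n"
    using assms by (simp add: durfee_partitions_def partitions_def)
  ultimately have "sum_mset U + k\<^sup>2 + sum_mset (M - durfee_top k M) = n"
    by simp
  then show ?thesis
    using durfee_top_props(3,4)[OF assms] durfee_square_le[OF assms]
    by (simp add: durfee_split_def mem_durfee_decompositions U_def)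
qed

lemma bij_betw_durfee_assemble:
  assumes "1 \<le> k" "k\<^sup>2 \<le> n"
  shows "bij_betw (durfee_assemble k) (durfee_decompositions n k) (durfee_partitions n k)"
proof (rule bij_betw_byWitness[where f' = "durfee_split k"])
  show "\<forall>p \<in> durfee_decompositions n k. durfee_split k (durfee_assemble k p) = p"
    using assms(2) by (auto simp: mem_durfee_decompositions durfee_split_def durfee_assemble_def
        durfee_top_shift_add image_mset_minus_plus)
  show "\<forall>M \<in> durfee_partitions n k. durfee_assemble k (durfee_split k M) = M"
    by (auto simp: durfee_split_def durfee_assemble_def image_mset_plus_minus durfee_top_props
        subset_mset.add_diff_inverse)
  show "durfee_assemble k ` durfee_decompositions n k \<subseteq> durfee_partitions n k"
    using durfee_assemble_mem_durfee_partitions[OF assms] by blast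
  show "durfee_split k ` durfee_partitions n k \<subseteq> durfee_decompositions n k"
    using durfee_split_mem_durfee_decompositions by blast
qed

lemma card_durfee_partitions:
  assumes "1 \<le> k" "k\<^sup>2 \<le> n"
  shows "card (durfee_partitions n k) =
           (\<Sum>j\<le>n - k\<^sup>2. bounded_partition_count k j * bounded_partition_count k (n - k\<^sup>2 - j))"
proof -
  have "card (durfee_decompositions n k) =
      (\<Sum>j\<le>n - k\<^sup>2. card (padded_partitions k j \<times> partitions_parts_le k (n - k\<^sup>2 - j)))"
    unfolding durfee_decompositions_def
    by (rule card_UN_disjoint)
      (simp_all add: finite_padded_partitions finite_partitions_parts_le,
        auto simp: padded_partitions_def)
  then show ?thesis
    using bij_betw_same_card[OF bij_betw_durfee_assemble[OF assms]]
    by (simp add: card_cartesian_product card_padded_partitions card_partitions_parts_le)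
qed

lemma E_eq_card_durfee_partitions:
  assumes "1 \<le> k" "k\<^sup>2 \<le> n"
  shows "E k (n - k\<^sup>2) = of_nat (card (durfee_partitions n k))"
  by (simp add: E_eq_convolution card_durfee_partitions[OF assms])

lemma le_nat_floor_sqrt_iff: "k \<le> nat \<lfloor>sqrt (real n)\<rfloor> \<longleftrightarrow> k\<^sup>2 \<le> n"
proof
  assume "k \<le> nat \<lfloor>sqrt (real n)\<rfloor>"
  then have "real k \<le> real (nat \<lfloor>sqrt (real n)\<rfloor>)"
    by (simp only: of_nat_le_iff)
  also have "\<dots> \<le> sqrt (real n)"
    by (rule of_nat_floor) simp
  finally have "(real k)\<^sup>2 \<le> (sqrt (real n))\<^sup>2"
    by (rule power_mono) simp
  then show "k\<^sup>2 \<le> n"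
    by (simp flip: of_nat_power)
next
  assume "k\<^sup>2 \<le> n"
  then have "(real k)\<^sup>2 \<le> real n"
    by (simp flip: of_nat_power)
  then show "k \<le> nat \<lfloor>sqrt (real n)\<rfloor>"
    by (intro le_nat_floor real_le_rsqrt)
qed

theorem partition_count_eq_sum_E:
  assumes "n \<ge> 1"
  shows "of_nat (partition_count n) = (\<Sum>k=1..nat \<lfloor>sqrt (real n)\<rfloor>. E k (n - k\<^sup>2))"
proof -
  define s where "s = nat \<lfloor>sqrt (real n)\<rfloor>"
  have "partitions n = (\<Union>k\<in>{1..s}. durfee_partitions n k)"
  proof (intro equalityI subsetI)
    fix M assume "M \<in> partitions n"
    then obtain k where "k \<ge> 1" "M \<in> durfee_partitions n k"
      using partition_has_durfee_square assms by blast
    then show "M \<in> (\<Union>k\<in>{1..s}. durfee_partitions n k)"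
      using durfee_square_le le_nat_floor_sqrt_iff by (auto simp: s_def)
  qed (use durfee_partitions_subset in blast)
  then have "card (partitions n) = (\<Sum>k=1..s. card (durfee_partitions n k))"
    using durfee_square_unique
    by (auto intro!: card_UN_disjoint finite_subset[OF durfee_partitions_subset finite_partitions])
  then have "of_nat (partition_count n) = (\<Sum>k=1..s. of_nat (card (durfee_partitions n k)) :: rat)"
    by (simp add: partition_count_def partitions_def)
  also have "\<dots> = (\<Sum>k=1..s. E k (n - k\<^sup>2))"
    by (intro sum.cong) (auto simp: s_def le_nat_floor_sqrt_iff E_eq_card_durfee_partitions)
  finally show ?thesis
    by (simp add: s_def)
qed

theorem theorem8p1:
  shows "(\<forall>k\<ge>1. \<exists>P :: nat \<Rightarrow> rat poly.
            \<forall>x::nat. E k x = poly (P (x mod Lcm {1..k})) (of_nat x))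
       \<and> (\<forall>n::nat. n \<ge> 1 \<longrightarrow>
            of_nat (partition_count n) = (\<Sum>k=1..nat \<lfloor>sqrt (real n)\<rfloor>. E k (n - k^2)))"
  using E_quasi_polynomial partition_count_eq_sum_E by blast

end
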